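(* Let $\bm{DS}\subset\mathbb{R}^d$ be a finite set with $|\bm{DS}|=n$ and let $D\subseteq\bm{DS}$ with $|D|=n'$. Consider the procedure $\mathrm{cac}(\bm{DS},D)$: initialize $C\leftarrow\mathbb{R}^d$; for each $x\in\bm{DS}\setminus D$, call a subroutine which either returns an affine function $\pi(z)=w\cdot z+b$ ($w\in\mathbb{R}^d$, $b\in\mathbb{R}$) with $\pi(z)<0$ for all $z\in D$ and $\pi(x)>0$, or reports that no such affine function exists; in the latter case the procedure terminates and outputs $\emptyset$ (failure), and otherwise it sets $C\leftarrow C\cap\{z\in\mathbb{R}^d\mid \pi(z)\le 0\}$; after all $x\in\bm{DS}\setminus D$ are processed, it outputs $C$. Then: (1) If $\mathrm{cac}(\bm{DS},D)$ outputs $\emptyset$, then $D$ is not convex-area separable in $\bm{DS}$. (2) If $\mathrm{cac}(\bm{DS},D)$ outputs $C\neq\emptyset$, then $C$ is a convex area with $D\subseteq C$ and $C\cap(\bm{DS}\setminus D)=\emptyset$. (3) If the subroutine runs in $O(n')$ time on each call, the running time of $\mathrm{cac}$ is $O(nn')$.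
   Context: A convex area in $\mathbb{R}^d$ is a set of the form $\bigcap_{k=1}^{K}\{z\in\mathbb{R}^d\mid \alpha_k\cdot z+\gamma_k\le 0\}$ with $\alpha_k\in\mathbb{R}^d$, $\gamma_k\in\mathbb{R}$ (with $\mathbb{R}^d$ itself, the empty intersection, also allowed). A subset $D\subseteq\bm{DS}$ is convex-area separable in $\bm{DS}$ if there exists a convex area $C$ with $D\subseteq C$ and $C\cap(\bm{DS}\setminus D)=\emptyset$. *)

theory Defs
  imports "HOL-Analysis.Analysis"
begin

text \<open>Points of R^d are modelled as vectors of type real^'d (d = CARD('d)).\<close>

definition convex_area :: "(real^'d) set \<Rightarrow> bool" where
  "convex_area C \<longleftrightarrow>
     (\<exists>L :: ((real^'d) \<times> real) list.
        C = {z. \<forall>(\<alpha>, \<gamma>) \<in> set L. \<alpha> \<bullet> z + \<gamma> \<le> 0})"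

definition convex_area_separable :: "(real^'d) set \<Rightarrow> (real^'d) set \<Rightarrow> bool" where
  "convex_area_separable D DS \<longleftrightarrow>
     (\<exists>C. convex_area C \<and> D \<subseteq> C \<and> C \<inter> (DS - D) = {})"

definition sub_spec :: "((real^'d) set \<Rightarrow> real^'d \<Rightarrow> ((real^'d) \<times> real) option)
                         \<Rightarrow> (real^'d) set \<Rightarrow> real^'d \<Rightarrow> bool" where
  "sub_spec sub D x \<longleftrightarrow>
     (case sub D x of
        Some (w, b) \<Rightarrow> (\<forall>z\<in>D. w \<bullet> z + b < 0) \<and> w \<bullet> x + b > 0
      | None \<Rightarrow> \<not> (\<exists>w b. (\<forall>z\<in>D. w \<bullet> z + b < 0) \<and> w \<bullet> x + b > 0))"

text \<open>The loop of cac, processing the points of DS - D in the order of the list.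
  None = failure (the procedure outputs the empty set as failure signal).\<close>
fun cac_loop :: "((real^'d) set \<Rightarrow> real^'d \<Rightarrow> ((real^'d) \<times> real) option)
                  \<Rightarrow> (real^'d) set \<Rightarrow> (real^'d) list \<Rightarrow> (real^'d) set \<Rightarrow> (real^'d) set option" where
  "cac_loop sub D [] C = Some C"
| "cac_loop sub D (x # xs) C =
     (case sub D x of
        None \<Rightarrow> None
      | Some (w, b) \<Rightarrow> cac_loop sub D xs (C \<inter> {z. w \<bullet> z + b \<le> 0}))"

definition cac :: "((real^'d) set \<Rightarrow> real^'d \<Rightarrow> ((real^'d) \<times> real) option)
                    \<Rightarrow> (real^'d) set \<Rightarrow> (real^'d) list \<Rightarrow> (real^'d) set option" where
  "cac sub D xs = cac_loop sub D xs UNIV"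

text \<open>Running time of cac: each processed point costs the subroutine time T D x
  plus one unit for the bookkeeping (intersecting with a half-space); the
  procedure stops at the first failing call.\<close>
fun cac_time :: "((real^'d) set \<Rightarrow> real^'d \<Rightarrow> ((real^'d) \<times> real) option)
                  \<Rightarrow> ((real^'d) set \<Rightarrow> real^'d \<Rightarrow> nat)
                  \<Rightarrow> (real^'d) set \<Rightarrow> (real^'d) list \<Rightarrow> nat" where
  "cac_time sub T D [] = 0"
| "cac_time sub T D (x # xs) =
     T D x + 1 + (case sub D x of None \<Rightarrow> 0 | Some _ \<Rightarrow> cac_time sub T D xs)"

end

theory Submission
  imports Defs
begin

text \<open>If some convex area contains D but not x, one of its defining half-spaces
  already excludes x; shifting that half-space by half of its value at x makes it
  strict on D, so the subroutine cannot fail on x. Hence a failing run certifies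
  non-separability. A successful run intersects half-spaces each of which contains D
  and cuts off one point of DS - D. Each of the at most n iterations costs O(n').\<close>

lemma convex_area_UNIV: "convex_area (UNIV :: (real^'d) set)"
  unfolding convex_area_def by (intro exI[of _ "[]"]) simp

lemma convex_area_Int_halfspace:
  assumes "convex_area C"
  shows "convex_area (C \<inter> {z. w \<bullet> z + b \<le> 0})"
proof -
  obtain L where "C = {z. \<forall>(\<alpha>, \<gamma>) \<in> set L. \<alpha> \<bullet> z + \<gamma> \<le> 0}"
    using assms unfolding convex_area_def by blast
  then show ?thesis
    unfolding convex_area_def by (intro exI[of _ "(w, b) # L"]) auto
qed

lemma convex_area_strict_separation:
  assumes "convex_area C" "D \<subseteq> C" "x \<notin> C"
  shows "\<exists>w b. (\<forall>z\<in>D. w \<bullet> z + b < 0) \<and> w \<bullet> x + b > 0"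
proof -
  obtain L where L: "C = {z. \<forall>(\<alpha>, \<gamma>) \<in> set L. \<alpha> \<bullet> z + \<gamma> \<le> 0}"
    using assms(1) unfolding convex_area_def by blast
  then obtain a g where ag: "(a, g) \<in> set L" "a \<bullet> x + g > 0"
    using assms(3) by (auto simp: not_le)
  have D_le: "a \<bullet> z + g \<le> 0" if "z \<in> D" for z
    using that assms(2) ag(1) L by auto
  define e where "e = (a \<bullet> x + g) / 2"
  have "e > 0" "a \<bullet> x + (g - e) > 0"
    using ag(2) by (simp_all add: e_def field_simps)
  moreover have "\<forall>z\<in>D. a \<bullet> z + (g - e) < 0"
    using D_le \<open>e > 0\<close> by fastforce
  ultimately show ?thesis by blast
qed

lemma cac_loop_NoneD:
  "cac_loop sub D xs C = None \<Longrightarrow> \<exists>x\<in>set xs. sub D x = None"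
  by (induction xs arbitrary: C) (auto split: option.splits)

lemma cac_loop_subset:
  "cac_loop sub D xs C = Some C' \<Longrightarrow> C' \<subseteq> C"
  by (induction xs arbitrary: C) (fastforce split: option.splits)+

lemma cac_loop_SomeD:
  assumes "cac_loop sub D xs C = Some C'" "\<forall>x\<in>set xs. sub_spec sub D x"
    and "convex_area C" "D \<subseteq> C"
  shows "convex_area C' \<and> D \<subseteq> C' \<and> C' \<inter> set xs = {}"
  using assms
proof (induction xs arbitrary: C)
  case Nil
  then show ?case by simp
next
  case (Cons x xs)
  then obtain w b where sub_x: "sub D x = Some (w, b)"
    by (cases "sub D x") auto
  with Cons.prems(2) have D_neg: "\<forall>z\<in>D. w \<bullet> z + b < 0" and x_pos: "w \<bullet> x + b > 0"
    unfolding sub_spec_def by auto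
  let ?H = "C \<inter> {z. w \<bullet> z + b \<le> 0}"
  have loop: "cac_loop sub D xs ?H = Some C'"
    using Cons.prems(1) sub_x by simp
  have "convex_area ?H" "D \<subseteq> ?H"
    using Cons.prems(3,4) D_neg convex_area_Int_halfspace by (auto intro: less_imp_le)
  with Cons.IH[OF loop] Cons.prems(2) have "convex_area C' \<and> D \<subseteq> C' \<and> C' \<inter> set xs = {}"
    by simp
  moreover have "x \<notin> C'"
    using cac_loop_subset[OF loop] x_pos by auto
  ultimately show ?case by auto
qed

lemma cac_None_not_separable:
  assumes "cac sub D xs = None" "set xs \<subseteq> DS - D" "\<forall>x\<in>set xs. sub_spec sub D x"
  shows "\<not> convex_area_separable D DS"
proof
  assume "convex_area_separable D DS"
  then obtain C where C: "convex_area C" "D \<subseteq> C" "C \<inter> (DS - D) = {}"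
    unfolding convex_area_separable_def by blast
  obtain x where x: "x \<in> set xs" "sub D x = None"
    using assms(1) cac_loop_NoneD unfolding cac_def by blast
  then have "\<not> (\<exists>w b. (\<forall>z\<in>D. w \<bullet> z + b < 0) \<and> w \<bullet> x + b > 0)"
    using assms(3) unfolding sub_spec_def by fastforce
  moreover have "x \<notin> C"
    using C(3) x(1) assms(2) by auto
  ultimately show False
    using convex_area_strict_separation[OF C(1,2)] by blast
qed

lemma cac_SomeD:
  assumes "cac sub D xs = Some C" "\<forall>x\<in>set xs. sub_spec sub D x"
  shows "convex_area C \<and> D \<subseteq> C \<and> C \<inter> set xs = {}"
  using cac_loop_SomeD[OF assms[unfolded cac_def]] convex_area_UNIV by blast

lemma cac_time_le:
  "\<forall>x\<in>set xs. T D x \<le> M \<Longrightarrow> cac_time sub T D xs \<le> length xs * (M + 1)"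
  by (induction xs) (auto split: option.splits)

lemma cac_time_le_card:
  assumes "finite DS" "distinct xs" "set xs \<subseteq> DS" "\<forall>x\<in>set xs. T D x \<le> c * (card D + 1)"
  shows "cac_time sub T D xs \<le> (c + 1) * (card DS + 1) * (card D + 1)"
proof -
  have "length xs \<le> card DS"
    using assms(1-3) by (metis distinct_card card_mono)
  have "cac_time sub T D xs \<le> length xs * (c * (card D + 1) + 1)"
    using assms(4) by (rule cac_time_le)
  also have "\<dots> \<le> (card DS + 1) * ((c + 1) * (card D + 1))"
    using \<open>length xs \<le> card DS\<close> by (intro mult_le_mono) simp_all
  finally show ?thesis
    by (simp only: mult_ac)
qed

theorem lemma2:
  shows
  "(\<forall>(DS :: (real^'d) set) D xs sub.
      finite DS \<and> D \<subseteq> DS \<and> distinct xs \<and> set xs = DS - D \<and>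
      (\<forall>x\<in>DS - D. sub_spec sub D x) \<longrightarrow>
        (cac sub D xs = None \<longrightarrow> \<not> convex_area_separable D DS) \<and>
        (\<forall>C. cac sub D xs = Some C \<and> C \<noteq> {} \<longrightarrow>
              convex_area C \<and> D \<subseteq> C \<and> C \<inter> (DS - D) = {}))
   \<and>
   (\<forall>c :: nat. \<exists>K :: nat. \<forall>(DS :: (real^'d) set) D xs sub T.
      finite DS \<and> D \<subseteq> DS \<and> distinct xs \<and> set xs = DS - D \<and>
      (\<forall>x\<in>DS - D. sub_spec sub D x) \<and>
      (\<forall>x\<in>DS - D. T D x \<le> c * (card D + 1)) \<longrightarrow>
        cac_time sub T D xs \<le> K * (card DS + 1) * (card D + 1))"
proof (rule conjI)
  show "\<forall>(DS :: (real^'d) set) D xs sub. finite DS \<and> D \<subseteq> DS \<and> distinct xs \<and>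
      set xs = DS - D \<and> (\<forall>x\<in>DS - D. sub_spec sub D x) \<longrightarrow>
        (cac sub D xs = None \<longrightarrow> \<not> convex_area_separable D DS) \<and>
        (\<forall>C. cac sub D xs = Some C \<and> C \<noteq> {} \<longrightarrow> convex_area C \<and> D \<subseteq> C \<and> C \<inter> (DS - D) = {})"
    using cac_None_not_separable cac_SomeD by (metis order_refl)
  show "\<forall>c. \<exists>K. \<forall>(DS :: (real^'d) set) D xs sub T. finite DS \<and> D \<subseteq> DS \<and> distinct xs \<and>
      set xs = DS - D \<and> (\<forall>x\<in>DS - D. sub_spec sub D x) \<and> (\<forall>x\<in>DS - D. T D x \<le> c * (card D + 1)) \<longrightarrow>
        cac_time sub T D xs \<le> K * (card DS + 1) * (card D + 1)"
    using cac_time_le_card by (metis Diff_subset)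
qed

end
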